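(* Consider a finite stochastic partial monitoring game with $N$ actions, $M$ outcomes and $A$ symbols, given by a loss matrix $L=(l_{i,j})\in\mathbb{R}^{N\times M}$, a feedback matrix $H=(h_{i,j})\in[A]^{N\times M}$ and an opponent strategy $p^*\in\mathcal{P}_M$, assumed globally observable and such that action $1$ is the unique optimal action under $p^*$. Let $p^*_i=S_ip^*$ for $i\in[N]$. Then any strongly consistent algorithm satisfies, for all sufficiently large $T$, $$\forall q\in\mathcal{C}_1^c:\quad \sum_{i\in[N]}\mathbb{E}[N_i(T)]\,D(p^*_i\,\Vert\,S_iq)\ \ge\ \log T-\mathrm{o}(\log T).$$
   Context: Game: at each round $t=1,\dots,T$ the learner chooses an action $i(t)\in[N]$ and the opponent's outcome $j(t)\in[M]$ is drawn i.i.d. from $p^*\in\mathcal{P}_M$ (the set of probability distributions on $[M]$); the learner knows $L,H$, suffers the unobserved loss $l_{i(t),j(t)}$ and observes only the symbol $h_{i(t),j(t)}\in[A]$, where $[A]=\{1,\dots,A\}$. $L_i$ denotes the $i$-th row of $L$. Action $1$ is optimal: $1=\arg\min_i L_i^\top p^*$ uniquely. $\Delta_i=(L_i-L_1)^\top p^*$; $N_i(t)$ is the number of rounds before round $t$ in which action $i$ was selected; the regret is $\mathrm{Regret}(T)=\sum_{t=1}^T\Delta_{i(t)}$. Signal matrix: $S_i\in\{0,1\}^{A\times M}$ with $(S_i)_{k,j}=1$ iff $h_{i,j}=k$, so $S_iq$ is the distribution of observed symbols when playing $i$ under outcome distribution $q$. Optimality cell: $\mathcal{C}_i=\{q\in\mathcal{P}_M:\forall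 j\neq i,\ (L_i-L_j)^\top q\le 0\}$, and $\mathcal{C}_i^c=\mathcal{P}_M\setminus\mathcal{C}_i$. $D(p\Vert q)=\sum_k p_k\log(p_k/q_k)$ is the KL divergence of discrete distributions with $0\log(0/0)=0$. Global observability: for all pairs $i,j$, $L_i-L_j\in\bigoplus_{k\in[N]}\mathrm{Im}\,S_k^\top$. An algorithm is strongly consistent if $\mathbb{E}[\mathrm{Regret}(T)]=\mathrm{o}(T^a)$ for every $a>0$ and every opponent strategy $p\in\mathcal{P}_M$ (with $L,H$ fixed). *)

theory Defs
  imports "HOL-Probability.Probability" "HOL-Library.Landau_Symbols"
begin

(* Actions: finite type 'a ([N]); outcomes: finite type 'm ([M]);
   symbols: finite type 's ([A]).  Probability vectors on [M] are 'm pmf. *)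

definition exp_loss :: "('a \<Rightarrow> 'm::finite \<Rightarrow> real) \<Rightarrow> 'a \<Rightarrow> 'm pmf \<Rightarrow> real" where
  "exp_loss L i q = (\<Sum>j\<in>UNIV. L i j * pmf q j)"

(* S_i q : distribution of the observed symbol when playing i under q *)
definition signal_dist :: "('a \<Rightarrow> 'm \<Rightarrow> 's) \<Rightarrow> 'a \<Rightarrow> 'm pmf \<Rightarrow> 's pmf" where
  "signal_dist H i q = map_pmf (H i) q"

definition KL :: "'s::finite pmf \<Rightarrow> 's pmf \<Rightarrow> ereal" where
  "KL p q = (if \<exists>k. pmf p k > 0 \<and> pmf q k = 0 then \<infinity>
             else ereal (\<Sum>k\<in>UNIV. if pmf p k = 0 then 0
                                      else pmf p k * ln (pmf p k / pmf q k)))"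

definition cell :: "('a \<Rightarrow> 'm::finite \<Rightarrow> real) \<Rightarrow> 'a \<Rightarrow> 'm pmf set" where
  "cell L i = {q. \<forall>j. j \<noteq> i \<longrightarrow> exp_loss L i q - exp_loss L j q \<le> 0}"

(* global observability: L_i - L_j \<in> \<Oplus>_k Im S_k^T *)
definition globally_observable ::
  "('a::finite \<Rightarrow> 'm \<Rightarrow> real) \<Rightarrow> ('a \<Rightarrow> 'm \<Rightarrow> 's) \<Rightarrow> bool" where
  "globally_observable L H = (\<forall>i j. \<exists>z :: 'a \<Rightarrow> 's \<Rightarrow> real.
      \<forall>x. L i x - L j x = (\<Sum>k\<in>UNIV. z k (H k x)))"

type_synonym ('a, 's) algorithm = "('a \<times> 's) list \<Rightarrow> 'a pmf"

fun hist :: "('a, 's) algorithm \<Rightarrow> ('a \<Rightarrow> 'm \<Rightarrow> 's) \<Rightarrow> 'm pmf \<Rightarrow> nat \<Rightarrow> ('a \<times> 's) list pmf" where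
  "hist alg H p 0 = return_pmf []"
| "hist alg H p (Suc t) =
     bind_pmf (hist alg H p t) (\<lambda>h. bind_pmf (alg h) (\<lambda>i. map_pmf (\<lambda>j. h @ [(i, H i j)]) p))"

(* E[N_i(T)]: expected number of rounds before round T in which i was selected *)
definition exp_count :: "('a, 's) algorithm \<Rightarrow> ('a \<Rightarrow> 'm \<Rightarrow> 's) \<Rightarrow> 'm pmf \<Rightarrow> 'a \<Rightarrow> nat \<Rightarrow> real" where
  "exp_count alg H p i T = measure_pmf.expectation (hist alg H p (T - 1))
      (\<lambda>h. real (length (filter (\<lambda>x. fst x = i) h)))"

definition exp_regret :: "('a::finite \<Rightarrow> 'm::finite \<Rightarrow> real) \<Rightarrow> ('a, 's) algorithm \<Rightarrow> ('a \<Rightarrow> 'm \<Rightarrow> 's)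
      \<Rightarrow> 'm pmf \<Rightarrow> nat \<Rightarrow> real" where
  "exp_regret L alg H p T = measure_pmf.expectation (hist alg H p T)
      (\<lambda>h. (\<Sum>x\<leftarrow>h. exp_loss L (fst x) p - (MIN k. exp_loss L k p)))"

definition strongly_consistent :: "('a::finite \<Rightarrow> 'm::finite \<Rightarrow> real) \<Rightarrow> ('a \<Rightarrow> 'm \<Rightarrow> 's)
      \<Rightarrow> ('a, 's) algorithm \<Rightarrow> bool" where
  "strongly_consistent L H alg = (\<forall>p :: 'm pmf. \<forall>a::real. a > 0 \<longrightarrow>
      (\<lambda>T. exp_regret L alg H p T) \<in> o(\<lambda>T. real T powr a))"

end

theory Submission
  imports Defs
begin

(* Change of measure. Let P and Q be the laws of the history of the first t rounds when the
   opponent plays p* and q respectively. By the chain rule, D(P || Q) is the sum over actions i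
   of E_P[N_i(t)] D(S_i p* || S_i q), and by the log-sum inequality D(P || Q) is at least
   P(E) log (1 / Q(E)) - 2 for every event E. Take E = {N_1(t) >= t/2}. Action 1 is optimal under
   p* but not under q, so by Markov's inequality strong consistency at p* gives P(E) >= 1 - a and
   strong consistency at q gives Q(E) <= t^(a-1), for every a in (0,1). Hence the expected
   divergence is at least (1-a)^2 log t - 2, and letting a tend to 0 gives log t - o(log t). *)

lemma mult_ln_ge_minus_one:
  fixes x :: real
  assumes "0 \<le> x"
  shows "-1 \<le> x * ln x"
proof (cases "x = 0")
  case False
  with assms have x: "0 < x" by simp
  have "- ln x \<le> 1 / x - 1"
    using ln_le_minus_one[of "1 / x"] x by (simp add: ln_div)
  then have "x * (- ln x) \<le> x * (1 / x - 1)"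
    using x by (intro mult_left_mono) auto
  then show ?thesis using x by (simp add: algebra_simps)
qed simp

lemma log_sum_inequality:
  fixes a b :: "'x \<Rightarrow> real"
  assumes S: "finite S"
    and a: "\<And>h. h \<in> S \<Longrightarrow> 0 \<le> a h" and b: "\<And>h. h \<in> S \<Longrightarrow> 0 \<le> b h"
    and ab: "\<And>h. h \<in> S \<Longrightarrow> 0 < a h \<Longrightarrow> 0 < b h"
  shows "sum a S * ln (sum a S / sum b S) \<le> (\<Sum>h\<in>S. a h * ln (a h / b h))"
proof (cases "sum a S = 0")
  case True
  then have "\<forall>h\<in>S. a h = 0" using sum_nonneg_eq_0_iff[OF S] a by blast
  then show ?thesis using True by simp
next
  case False
  let ?A = "sum a S" and ?B = "sum b S"
  have A: "0 < ?A" using False sum_nonneg[of S a] a by (simp add: order_less_le)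
  then obtain h0 where "h0 \<in> S" "0 < a h0" by (meson not_le sum_nonpos)
  then have B: "0 < ?B" using S ab b by (intro sum_pos2[of S h0]) auto
  \<comment> \<open>tangent-line bound \<open>ln r \<le> r - 1\<close> at \<open>r = (A/B) / (a h / b h)\<close>\<close>
  have "a h * ln (?A / ?B) + a h - b h * ?A / ?B \<le> a h * ln (a h / b h)" if h: "h \<in> S" for h
  proof (cases "a h = 0")
    case True
    then show ?thesis using b[OF h] A B by simp
  next
    case False
    then have ah: "0 < a h" using a[OF h] by simp
    then have bh: "0 < b h" using ab[OF h] by simp
    define r where "r = (?A / ?B) / (a h / b h)"
    have r: "0 < r" unfolding r_def using A B ah bh by simp
    have "ln r = ln (?A / ?B) - ln (a h / b h)"
      unfolding r_def using A B ah bh by (intro ln_divide_pos) auto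
    then have "a h * ln (?A / ?B) = a h * ln r + a h * ln (a h / b h)"
      unfolding distrib_left[symmetric] by simp
    moreover have "a h * (r - 1) = b h * ?A / ?B - a h"
      unfolding r_def using ah bh by (simp add: field_simps)
    moreover have "a h * ln r \<le> a h * (r - 1)"
      using ah r by (intro mult_left_mono ln_le_minus_one) auto
    ultimately show ?thesis by linarith
  qed
  then have "(\<Sum>h\<in>S. a h * ln (?A / ?B) + a h - b h * ?A / ?B) \<le> (\<Sum>h\<in>S. a h * ln (a h / b h))"
    by (rule sum_mono)
  moreover have "(\<Sum>h\<in>S. a h * ln (?A / ?B) + a h - b h * ?A / ?B) = ?A * ln (?A / ?B)"
    using B by (simp add: sum.distrib sum_subtractf sum_distrib_right[symmetric]
        sum_divide_distrib[symmetric])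
  ultimately show ?thesis by simp
qed

lemma mult_ln_div_ge:
  fixes x y r :: real
  assumes "0 \<le> x" "y \<le> r" "0 < x \<Longrightarrow> 0 < y"
  shows "-1 - x * ln r \<le> x * ln (x / y)"
proof (cases "x = 0")
  case False
  with assms have x: "0 < x" and y: "0 < y" by auto
  have "x * ln y \<le> x * ln r" using x y assms(2) by (intro mult_left_mono) auto
  moreover have "x * ln (x / y) = x * ln x - x * ln y" using x y by (simp add: ln_div algebra_simps)
  ultimately show ?thesis using mult_ln_ge_minus_one[of x] x by linarith
qed simp

lemma divergence_ge_event_bound:
  fixes P Q :: "'x \<Rightarrow> real"
  assumes W: "finite W" and E: "E \<subseteq> W"
    and P: "\<And>h. h \<in> W \<Longrightarrow> 0 \<le> P h" and Q: "\<And>h. h \<in> W \<Longrightarrow> 0 \<le> Q h"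
    and PQ: "\<And>h. h \<in> W \<Longrightarrow> 0 < P h \<Longrightarrow> 0 < Q h"
    and "sum P W = 1" "sum Q W = 1"
    and QE: "sum Q E \<le> r"
  shows "- sum P E * ln r - 2 \<le> (\<Sum>h\<in>W. P h * ln (P h / Q h))"
proof -
  have pos: "0 < sum Q F" if F: "F \<subseteq> W" "0 < sum P F" for F
  proof -
    from F obtain h where "h \<in> F" "0 < P h" by (meson not_le sum_nonpos)
    with F W show ?thesis by (intro sum_pos2[of F h]) (auto intro: finite_subset PQ Q)
  qed
  have log_sum: "sum P F * ln (sum P F / sum Q F) \<le> (\<Sum>h\<in>F. P h * ln (P h / Q h))"
    if "F \<subseteq> W" for F
    using that W by (intro log_sum_inequality) (auto intro: finite_subset P Q PQ)
  have split: "sum f W = sum f (W - E) + sum f E" for f :: "'x \<Rightarrow> real"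
    by (rule sum.subset_diff[OF E W])
  have "-1 - sum P E * ln r \<le> sum P E * ln (sum P E / sum Q E)"
    using E QE pos[OF E] P by (intro mult_ln_div_ge sum_nonneg) auto
  moreover have "-1 - sum P (W - E) * ln 1 \<le> sum P (W - E) * ln (sum P (W - E) / sum Q (W - E))"
  proof (intro mult_ln_div_ge)
    have "0 \<le> sum Q E" using E Q by (intro sum_nonneg) auto
    then show "sum Q (W - E) \<le> 1" using split[of Q] \<open>sum Q W = 1\<close> by simp
  qed (use pos[of "W - E"] P in \<open>auto intro!: sum_nonneg\<close>)
  ultimately show ?thesis
    using log_sum[OF E] log_sum[of "W - E"] split[of "\<lambda>h. P h * ln (P h / Q h)"] by simp
qed

lemma markov_inequality_sum:
  fixes w X :: "'x \<Rightarrow> real"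
  assumes "finite W" "E \<subseteq> W" "\<And>h. h \<in> W \<Longrightarrow> 0 \<le> w h" "\<And>h. h \<in> W \<Longrightarrow> 0 \<le> X h"
    and "\<And>h. h \<in> E \<Longrightarrow> c \<le> X h"
  shows "c * sum w E \<le> (\<Sum>h\<in>W. w h * X h)"
proof -
  have "c * sum w E = (\<Sum>h\<in>E. w h * c)" by (simp add: sum_distrib_left mult.commute)
  also have "\<dots> \<le> (\<Sum>h\<in>E. w h * X h)" using assms by (intro sum_mono mult_left_mono) auto
  also have "\<dots> \<le> (\<Sum>h\<in>W. w h * X h)" using assms by (intro sum_mono2) auto
  finally show ?thesis .
qed

lemma strict_argmin_gap:
  fixes f :: "'a::finite \<Rightarrow> real"
  assumes "\<And>i. i \<noteq> i0 \<Longrightarrow> f i0 < f i"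
  obtains \<delta> where "0 < \<delta>" "\<And>i. i \<noteq> i0 \<Longrightarrow> f i0 + \<delta> \<le> f i"
proof -
  define \<delta> where "\<delta> = Min (insert 1 ((\<lambda>i. f i - f i0) ` {i. i \<noteq> i0}))"
  have "0 < \<delta>" unfolding \<delta>_def using assms by (subst Min_gr_iff) auto
  moreover have "\<delta> \<le> f i - f i0" if "i \<noteq> i0" for i
    unfolding \<delta>_def using that by (intro Min_le) auto
  ultimately show ?thesis using that[of \<delta>] by force
qed

lemma exists_little_o_deficit:
  fixes S :: "'b \<Rightarrow> ereal" and g :: "'b \<Rightarrow> real"
  assumes lower: "\<And>c. 0 < c \<Longrightarrow> \<forall>\<^sub>F x in F. ereal ((1 - c) * g x) \<le> S x"
  shows "\<exists>f. f \<in> o[F](g) \<and> (\<forall>\<^sub>F x in F. ereal (g x - f x) \<le> S x)"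
proof -
  define f where "f x = (if ereal (g x) \<le> S x then 0 else g x - real_of_ereal (S x))" for x
  have "f \<in> o[F](g)"
  proof (rule landau_o.smallI)
    fix c :: real assume c: "0 < c"
    show "\<forall>\<^sub>F x in F. norm (f x) \<le> c * norm (g x)"
      using lower[OF c]
    proof (rule eventually_mono)
      fix x assume x: "ereal ((1 - c) * g x) \<le> S x"
      show "norm (f x) \<le> c * norm (g x)"
      proof (cases "ereal (g x) \<le> S x")
        case False
        with x obtain s where s: "S x = ereal s" "(1 - c) * g x \<le> s" "s < g x"
          by (cases "S x") auto
        then have "0 < c * g x" by (simp add: algebra_simps)
        with c have "0 < g x" by (simp add: zero_less_mult_iff)
        with s show ?thesis using False by (simp add: f_def algebra_simps)
      qed (use c in \<open>simp add: f_def\<close>)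
    qed
  qed
  moreover have "\<forall>\<^sub>F x in F. ereal (g x - f x) \<le> S x"
    using lower[of 1]
  proof (rule eventually_mono)
    fix x assume "ereal ((1 - 1) * g x) \<le> S x"
    then show "ereal (g x - f x) \<le> S x"
      by (cases "S x") (auto simp: f_def)
  qed simp
  ultimately show ?thesis by blast
qed

lemma eventually_ln_absorbs_constant:
  fixes c C :: real
  assumes c: "0 < c"
  obtains a where "0 < a" "a < 1"
    "\<forall>\<^sub>F T in sequentially. (1 - c) * ln (real T) \<le> (1 - a)^2 * ln (real T) - C"
proof -
  define a where "a = min (1/2) (c/4)"
  have a: "0 < a" "a < 1" using c by (auto simp: a_def)
  have "2 * a \<le> c / 2" "0 \<le> a * a" by (auto simp: a_def)
  moreover have "(1 - a)^2 = 1 - 2 * a + a * a" by (simp add: power2_eq_square algebra_simps)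
  ultimately have coeff: "1 - c / 2 \<le> (1 - a)^2" by linarith
  have "\<forall>\<^sub>F T in sequentially. C \<le> c / 2 * ln (real T)" using c by real_asymp
  moreover have "\<forall>\<^sub>F T in sequentially. 0 \<le> ln (real T)" by real_asymp
  ultimately have "\<forall>\<^sub>F T in sequentially. (1 - c) * ln (real T) \<le> (1 - a)^2 * ln (real T) - C"
  proof eventually_elim
    case (elim T)
    then show ?case using mult_right_mono[OF coeff elim(2)] by (simp add: algebra_simps)
  qed
  with a that show ?thesis by blast
qed

lemma ln_le_one_plus_ln_pred:
  assumes "2 \<le> T"
  shows "ln (real T) \<le> 1 + ln (real (T - 1))"
proof -
  have "ln (real T) \<le> ln (2 * real (T - 1))" using assms by (subst ln_le_cancel_iff) auto
  also have "\<dots> = ln 2 + ln (real (T - 1))" using assms by (intro ln_mult_pos) auto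
  finally show ?thesis using ln_2_less_1 by simp
qed

lemma sum_pmf_UNIV: "(\<Sum>x\<in>(UNIV :: 'a::finite set). pmf M x) = 1"
  by (rule sum_pmf_eq_1) auto

lemma integral_pmf_eq_sum:
  fixes f :: "'x \<Rightarrow> real"
  assumes "finite A" "set_pmf M \<subseteq> A"
  shows "measure_pmf.expectation M f = (\<Sum>a\<in>A. pmf M a * f a)"
  using integral_measure_pmf_real[of A M f] assms by (auto simp: mult.commute)

lemma KL_eq_sum:
  assumes "set_pmf P \<subseteq> set_pmf Q"
  shows "KL P Q = ereal (\<Sum>k\<in>UNIV. pmf P k * ln (pmf P k / pmf Q k))"
proof -
  have "\<not> (\<exists>k. 0 < pmf P k \<and> pmf Q k = 0)"
    using assms by (metis less_irrefl pmf_eq_0_set_pmf subsetD)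
  then show ?thesis unfolding KL_def by (auto intro!: sum.cong)
qed

lemma KL_eq_infinity:
  assumes "\<not> set_pmf P \<subseteq> set_pmf Q"
  shows "KL P Q = \<infinity>"
proof -
  from assms obtain k where "k \<in> set_pmf P" "k \<notin> set_pmf Q" by blast
  then have "0 < pmf P k" "pmf Q k = 0" by (auto simp: pmf_positive pmf_eq_0_set_pmf)
  then show ?thesis unfolding KL_def by auto
qed

definition histories :: "nat \<Rightarrow> ('a \<times> 's) list set" where
  "histories t = {h. length h = t}"

definition times_played :: "'a \<Rightarrow> ('a \<times> 's) list \<Rightarrow> nat" where
  "times_played i h = length (filter (\<lambda>x. fst x = i) h)"

lemma finite_histories: "finite (histories t :: ('a::finite \<times> 's::finite) list set)"
  using finite_lists_length_eq[of "UNIV :: ('a \<times> 's) set" t] by (simp add: histories_def)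

lemma histories_Suc: "histories (Suc t) = (\<lambda>(h, x). h @ [x]) ` (histories t \<times> UNIV)"
  by (auto simp: histories_def length_Suc_conv_rev image_iff)

lemma sum_histories_Suc:
  fixes g :: "('a::finite \<times> 's::finite) list \<Rightarrow> 'b::comm_monoid_add"
  shows "(\<Sum>h\<in>histories (Suc t). g h) = (\<Sum>h\<in>histories t. \<Sum>x\<in>UNIV. g (h @ [x]))"
proof -
  have "inj_on (\<lambda>(h, x). h @ [x]) (histories t \<times> (UNIV :: ('a \<times> 's) set))"
    by (auto simp: inj_on_def)
  then show ?thesis
    by (simp add: histories_Suc sum.reindex sum.cartesian_product split_def)
qed

lemma times_played_le: "h \<in> histories t \<Longrightarrow> times_played i h \<le> t"
  unfolding histories_def times_played_def using length_filter_le by auto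

lemma set_pmf_hist: "set_pmf (hist alg H p t) \<subseteq> histories t"
  by (induction t) (auto simp: histories_def)

lemma strongly_consistent_regret_le:
  assumes "strongly_consistent L H alg" "0 < a" "0 < c"
  shows "\<forall>\<^sub>F t in sequentially. exp_regret L alg H p t \<le> c * real t powr a"
proof -
  have "(\<lambda>t. exp_regret L alg H p t) \<in> o(\<lambda>t. real t powr a)"
    using assms unfolding strongly_consistent_def by blast
  from landau_o.smallD[OF this \<open>0 < c\<close>] show ?thesis
    by eventually_elim (simp add: abs_le_iff)
qed

context
  fixes alg :: "('a::finite, 's::finite) algorithm" and H :: "'a \<Rightarrow> 'm::finite \<Rightarrow> 's"
begin

definition step_prob :: "'m pmf \<Rightarrow> ('a \<times> 's) list \<Rightarrow> 'a \<times> 's \<Rightarrow> real" where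
  "step_prob p h x = pmf (alg h) (fst x) * pmf (signal_dist H (fst x) p) (snd x)"

definition hist_weight :: "'m pmf \<Rightarrow> ('a \<times> 's) list \<Rightarrow> real" where
  "hist_weight p h = (\<Prod>k<length h. step_prob p (take k h) (h ! k))"

definition expected_plays :: "'m pmf \<Rightarrow> 'a \<Rightarrow> nat \<Rightarrow> real" where
  "expected_plays p i t = (\<Sum>k<t. \<Sum>h\<in>histories k. hist_weight p h * pmf (alg h) i)"

definition abs_cont_on_played :: "'m pmf \<Rightarrow> 'm pmf \<Rightarrow> nat \<Rightarrow> bool" where
  "abs_cont_on_played p q t \<longleftrightarrow> (\<forall>i. 0 < expected_plays p i t
      \<longrightarrow> set_pmf (signal_dist H i p) \<subseteq> set_pmf (signal_dist H i q))"

lemma abs_cont_on_playedD: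
  "abs_cont_on_played p q t \<Longrightarrow> 0 < expected_plays p i t
    \<Longrightarrow> set_pmf (signal_dist H i p) \<subseteq> set_pmf (signal_dist H i q)"
  by (simp add: abs_cont_on_played_def)

lemma step_prob_nonneg: "0 \<le> step_prob p h x"
  by (simp add: step_prob_def)

lemma hist_weight_nonneg: "0 \<le> hist_weight p h"
  unfolding hist_weight_def by (intro prod_nonneg) (simp add: step_prob_nonneg)

lemma hist_weight_Nil [simp]: "hist_weight p [] = 1"
  by (simp add: hist_weight_def)

lemma hist_weight_snoc: "hist_weight p (h @ [x]) = hist_weight p h * step_prob p h x"
  unfolding hist_weight_def by (simp add: nth_append)

lemma expected_plays_nonneg: "0 \<le> expected_plays p i t"
  unfolding expected_plays_def by (intro sum_nonneg mult_nonneg_nonneg hist_weight_nonneg) auto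

lemma sum_step_prob:
  "(\<Sum>x\<in>UNIV. step_prob p h x * g x)
     = (\<Sum>i\<in>UNIV. pmf (alg h) i * (\<Sum>s\<in>UNIV. pmf (signal_dist H i p) s * g (i, s)))"
  by (simp add: step_prob_def sum_distrib_left mult.assoc sum.cartesian_product split_beta
      UNIV_Times_UNIV[symmetric] del: UNIV_Times_UNIV)

lemma pmf_map_snoc:
  "pmf (map_pmf (\<lambda>j. h @ [(i, H i j)]) p) (h' @ [(i', s)])
     = (if h' = h \<and> i' = i then pmf (signal_dist H i p) s else 0)"
proof -
  have eq: "map_pmf (\<lambda>j. h @ [(i, H i j)]) p = map_pmf (\<lambda>s. h @ [(i, s)]) (signal_dist H i p)"
    by (simp add: signal_dist_def map_pmf_comp)
  show ?thesis
  proof (cases "h' = h \<and> i' = i")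
    case True
    have "inj (\<lambda>s. h @ [(i, s)])" by (auto intro: injI)
    from pmf_map_inj'[OF this, of "signal_dist H i p" s] True show ?thesis
      unfolding eq by auto
  next
    case False
    then have "h' @ [(i', s)] \<notin> set_pmf (map_pmf (\<lambda>s. h @ [(i, s)]) (signal_dist H i p))"
      by auto
    then have "pmf (map_pmf (\<lambda>s. h @ [(i, s)]) (signal_dist H i p)) (h' @ [(i', s)]) = 0"
      by (simp add: pmf_eq_0_set_pmf)
    with False show ?thesis unfolding eq by auto
  qed
qed

lemma pmf_hist: "pmf (hist alg H p t) y = (if y \<in> histories t then hist_weight p y else 0)"
proof (induction t arbitrary: y)
  case 0
  then show ?case by (auto simp: histories_def)
next
  case (Suc t)
  let ?next = "\<lambda>h i. pmf (map_pmf (\<lambda>j. h @ [(i, H i j)]) p) y"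
  have "pmf (hist alg H p (Suc t)) y
      = (\<Sum>h\<in>histories t. hist_weight p h * (\<Sum>i\<in>UNIV. pmf (alg h) i * ?next h i))"
    by (simp add: pmf_bind integral_pmf_eq_sum[OF finite_histories set_pmf_hist] Suc.IH
        integral_pmf_eq_sum[of UNIV] cong: sum.cong)
  also have "\<dots> = (if y \<in> histories (Suc t) then hist_weight p y else 0)"
  proof (cases "y \<in> histories (Suc t)")
    case True
    then obtain h0 i0 s0 where y: "y = h0 @ [(i0, s0)]" and h0: "h0 \<in> histories t"
      unfolding histories_Suc by auto
    have "(\<Sum>h\<in>histories t. hist_weight p h * (\<Sum>i\<in>UNIV. pmf (alg h) i * ?next h i))
        = (\<Sum>h\<in>histories t. if h = h0
             then hist_weight p h0 * (pmf (alg h0) i0 * pmf (signal_dist H i0 p) s0) else 0)"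
      unfolding y pmf_map_snoc by (intro sum.cong) (auto simp: if_distrib cong: if_cong)
    also have "\<dots> = hist_weight p y"
      using h0 by (simp add: finite_histories y hist_weight_snoc step_prob_def)
    finally show ?thesis using True by simp
  next
    case False
    then have "?next h i = 0" if "h \<in> histories t" for h i
      using that by (auto simp: pmf_eq_0_set_pmf histories_def)
    with False show ?thesis by simp
  qed
  finally show ?case .
qed

lemma expectation_hist:
  "measure_pmf.expectation (hist alg H p t) f = (\<Sum>h\<in>histories t. hist_weight p h * f h)"
  by (auto simp: integral_pmf_eq_sum[OF finite_histories set_pmf_hist] pmf_hist intro!: sum.cong)

lemma sum_hist_weight: "(\<Sum>h\<in>histories t. hist_weight p h) = 1"
  using sum_pmf_eq_1[OF finite_histories set_pmf_hist, of alg H p t] by (simp add: pmf_hist)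

text \<open>Wald's identity for the additive functional \<open>h \<mapsto> \<Sum>x\<leftarrow>h. g x\<close>.\<close>

lemma sum_hist_weight_sum_list:
  "(\<Sum>h\<in>histories t. hist_weight p h * sum_list (map g h))
     = (\<Sum>i\<in>UNIV. expected_plays p i t * (\<Sum>s\<in>UNIV. pmf (signal_dist H i p) s * g (i, s)))"
proof (induction t)
  case 0
  then show ?case by (simp add: histories_def expected_plays_def)
next
  case (Suc t)
  let ?G = "\<lambda>i. \<Sum>s\<in>UNIV. pmf (signal_dist H i p) s * g (i, s)"
  have step: "(\<Sum>x\<in>UNIV. hist_weight p h * step_prob p h x * (c + g x))
      = hist_weight p h * c + hist_weight p h * (\<Sum>i\<in>UNIV. pmf (alg h) i * ?G i)" for h c
  proof -
    have "(\<Sum>x\<in>UNIV. hist_weight p h * step_prob p h x * (c + g x))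
        = hist_weight p h * c * (\<Sum>x\<in>UNIV. step_prob p h x * 1)
          + hist_weight p h * (\<Sum>x\<in>UNIV. step_prob p h x * g x)"
      by (simp add: sum.distrib sum_distrib_left algebra_simps)
    then show ?thesis
      by (simp only: sum_step_prob) (simp add: sum_pmf_UNIV)
  qed
  have "(\<Sum>h\<in>histories (Suc t). hist_weight p h * sum_list (map g h))
      = (\<Sum>h\<in>histories t. hist_weight p h * sum_list (map g h))
        + (\<Sum>h\<in>histories t. hist_weight p h * (\<Sum>i\<in>UNIV. pmf (alg h) i * ?G i))"
    by (simp add: sum_histories_Suc hist_weight_snoc step sum.distrib)
  also have "(\<Sum>h\<in>histories t. hist_weight p h * (\<Sum>i\<in>UNIV. pmf (alg h) i * ?G i))
      = (\<Sum>i\<in>UNIV. (\<Sum>h\<in>histories t. hist_weight p h * pmf (alg h) i) * ?G i)"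
    by (simp add: sum_distrib_left sum_distrib_right mult.assoc sum.swap[of _ "histories t"])
  finally show ?case
    using Suc.IH by (simp add: expected_plays_def distrib_right sum.distrib)
qed

lemma expected_plays_eq_sum:
  "expected_plays p i t = (\<Sum>h\<in>histories t. hist_weight p h * real (times_played i h))"
proof -
  let ?played = "\<lambda>x. if fst x = i then 1 else (0 :: real)"
  have count: "real (times_played i h) = sum_list (map ?played h)" for h :: "('a \<times> 's) list"
    unfolding times_played_def by (induction h) auto
  have "(\<Sum>h\<in>histories t. hist_weight p h * real (times_played i h))
      = (\<Sum>j\<in>UNIV. expected_plays p j t * (\<Sum>s\<in>UNIV. pmf (signal_dist H j p) s * ?played (j, s)))"
    unfolding count by (rule sum_hist_weight_sum_list)
  also have "\<dots> = (\<Sum>j\<in>UNIV. if j = i then expected_plays p j t else 0)"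
    by (intro sum.cong) (auto simp: sum_pmf_UNIV)
  finally show ?thesis by simp
qed

lemma exp_count_eq_expected_plays: "exp_count alg H p i T = expected_plays p i (T - 1)"
  by (simp add: exp_count_def expectation_hist expected_plays_eq_sum times_played_def)

lemma sum_expected_plays: "(\<Sum>i\<in>UNIV. expected_plays p i t) = real t"
proof -
  have "(\<Sum>h\<in>histories t. hist_weight p h * sum_list (map (\<lambda>_. 1) h)) = real t"
    by (simp add: histories_def sum_list_triv sum_distrib_right[symmetric]
        sum_hist_weight[unfolded histories_def])
  then show ?thesis by (simp add: sum_hist_weight_sum_list sum_pmf_UNIV)
qed

lemma exp_regret_eq_sum:
  "exp_regret L alg H p t
     = (\<Sum>i\<in>UNIV. expected_plays p i t * (exp_loss L i p - (MIN k. exp_loss L k p)))"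
  by (simp add: exp_regret_def expectation_hist sum_hist_weight_sum_list sum_pmf_UNIV
      flip: sum_distrib_right)

lemma exp_regret_ge_plays:
  "expected_plays p i t * (exp_loss L i p - (MIN k. exp_loss L k p)) \<le> exp_regret L alg H p t"
  unfolding exp_regret_eq_sum
  by (rule member_le_sum) (auto intro!: mult_nonneg_nonneg expected_plays_nonneg)

lemma exp_regret_ge_gap:
  assumes "0 \<le> \<delta>" and gap: "\<And>i. i \<noteq> i0 \<Longrightarrow> exp_loss L i0 p + \<delta> \<le> exp_loss L i p"
  shows "\<delta> * (real t - expected_plays p i0 t) \<le> exp_regret L alg H p t"
proof -
  have "exp_loss L i0 p \<le> exp_loss L k p" for k
    using gap[of k] \<open>0 \<le> \<delta>\<close> by (cases "k = i0") auto
  then have min: "(MIN k. exp_loss L k p) = exp_loss L i0 p"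
    by (intro antisym) auto
  have "real t - expected_plays p i0 t = (\<Sum>i\<in>UNIV - {i0}. expected_plays p i t)"
    using sum_expected_plays[of p t] sum.remove[of UNIV i0 "\<lambda>i. expected_plays p i t"] by simp
  then have "\<delta> * (real t - expected_plays p i0 t) = (\<Sum>i\<in>UNIV - {i0}. expected_plays p i t) * \<delta>"
    by simp
  also have "\<dots> = (\<Sum>i\<in>UNIV - {i0}. expected_plays p i t * \<delta>)"
    by (rule sum_distrib_right)
  also have "\<dots> \<le> (\<Sum>i\<in>UNIV - {i0}. expected_plays p i t * (exp_loss L i p - (MIN k. exp_loss L k p)))"
    using gap min by (intro sum_mono mult_left_mono expected_plays_nonneg) force+
  also have "\<dots> \<le> exp_regret L alg H p t"
    unfolding exp_regret_eq_sum
    by (intro sum_mono2) (auto intro!: mult_nonneg_nonneg expected_plays_nonneg)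
  finally show ?thesis .
qed

lemma played_if_hist_weight_pos:
  assumes "h \<in> histories t" "0 < hist_weight p h" "x \<in> set h"
  shows "0 < expected_plays p (fst x) t"
proof -
  have "0 < times_played (fst x) h"
    using assms(3) by (auto simp: times_played_def filter_empty_conv)
  then have "0 < hist_weight p h * real (times_played (fst x) h)" using assms(2) by simp
  also have "\<dots> \<le> expected_plays p (fst x) t"
    unfolding expected_plays_eq_sum using assms(1)
    by (intro member_le_sum finite_histories) (auto intro!: mult_nonneg_nonneg hist_weight_nonneg)
  finally show ?thesis .
qed

lemma ln_hist_weight_ratio:
  assumes "0 < hist_weight p h"
    and "\<And>x. x \<in> set h \<Longrightarrow> set_pmf (signal_dist H (fst x) p) \<subseteq> set_pmf (signal_dist H (fst x) q)"
  shows "0 < hist_weight q h \<and> ln (hist_weight p h / hist_weight q h)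
           = (\<Sum>x\<leftarrow>h. ln (pmf (signal_dist H (fst x) p) (snd x) / pmf (signal_dist H (fst x) q) (snd x)))"
  using assms
proof (induction h rule: rev_induct)
  case Nil
  then show ?case by simp
next
  case (snoc x h)
  let ?Sp = "signal_dist H (fst x) p" and ?Sq = "signal_dist H (fst x) q"
  have wp: "0 < hist_weight p h" and sp: "0 < step_prob p h x"
    using snoc.prems(1) hist_weight_nonneg[of p h] step_prob_nonneg[of p h x]
    by (auto simp: hist_weight_snoc zero_less_mult_iff)
  then have IH: "0 < hist_weight q h" "ln (hist_weight p h / hist_weight q h)
      = (\<Sum>y\<leftarrow>h. ln (pmf (signal_dist H (fst y) p) (snd y) / pmf (signal_dist H (fst y) q) (snd y)))"
    using snoc.IH snoc.prems(2) by auto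
  have alg: "0 < pmf (alg h) (fst x)" and "0 < pmf ?Sp (snd x)"
    using sp by (auto simp: step_prob_def zero_less_mult_iff)
  then have Sq: "0 < pmf ?Sq (snd x)"
    using snoc.prems(2)[of x] by (auto simp: pmf_positive_iff)
  have ratio: "hist_weight p (h @ [x]) / hist_weight q (h @ [x])
      = (hist_weight p h / hist_weight q h) * (pmf ?Sp (snd x) / pmf ?Sq (snd x))"
    using alg by (simp add: hist_weight_snoc step_prob_def)
  have "ln (hist_weight p (h @ [x]) / hist_weight q (h @ [x]))
      = ln (hist_weight p h / hist_weight q h) + ln (pmf ?Sp (snd x) / pmf ?Sq (snd x))"
    unfolding ratio using wp IH(1) \<open>0 < pmf ?Sp (snd x)\<close> Sq by (intro ln_mult_pos divide_pos_pos)
  with IH alg Sq show ?case by (simp add: hist_weight_snoc step_prob_def)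
qed

lemma history_divergence_eq:
  assumes abs_cont: "abs_cont_on_played p q t"
  shows "(\<Sum>h\<in>histories t. hist_weight p h * ln (hist_weight p h / hist_weight q h))
       = (\<Sum>i\<in>UNIV. expected_plays p i t * real_of_ereal (KL (signal_dist H i p) (signal_dist H i q)))"
proof -
  let ?llr = "\<lambda>x. ln (pmf (signal_dist H (fst x) p) (snd x) / pmf (signal_dist H (fst x) q) (snd x))"
  have "(\<Sum>h\<in>histories t. hist_weight p h * ln (hist_weight p h / hist_weight q h))
      = (\<Sum>h\<in>histories t. hist_weight p h * sum_list (map ?llr h))"
  proof (rule sum.cong)
    fix h :: "('a \<times> 's) list" assume h: "h \<in> histories t"
    show "hist_weight p h * ln (hist_weight p h / hist_weight q h)
        = hist_weight p h * sum_list (map ?llr h)"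
    proof (cases "0 < hist_weight p h")
      case True
      with h abs_cont_on_playedD[OF abs_cont]
      have "0 < hist_weight q h \<and> ln (hist_weight p h / hist_weight q h) = sum_list (map ?llr h)"
        by (intro ln_hist_weight_ratio) (auto intro: played_if_hist_weight_pos)
      then show ?thesis by simp
    qed (use hist_weight_nonneg[of p h] in simp)
  qed simp
  also have "\<dots> = (\<Sum>i\<in>UNIV. expected_plays p i t * (\<Sum>s\<in>UNIV. pmf (signal_dist H i p) s
           * ln (pmf (signal_dist H i p) s / pmf (signal_dist H i q) s)))"
    by (simp add: sum_hist_weight_sum_list)
  also have "\<dots> = (\<Sum>i\<in>UNIV. expected_plays p i t * real_of_ereal (KL (signal_dist H i p) (signal_dist H i q)))"
  proof (intro sum.cong refl)
    fix i
    show "expected_plays p i t * (\<Sum>s\<in>UNIV. pmf (signal_dist H i p) s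
           * ln (pmf (signal_dist H i p) s / pmf (signal_dist H i q) s))
        = expected_plays p i t * real_of_ereal (KL (signal_dist H i p) (signal_dist H i q))"
    proof (cases "0 < expected_plays p i t")
      case True
      then show ?thesis by (simp add: KL_eq_sum[OF abs_cont_on_playedD[OF abs_cont True]])
    qed (use expected_plays_nonneg[of p i t] in simp)
  qed
  finally show ?thesis .
qed

lemma history_divergence_ge_event:
  assumes abs_cont: "abs_cont_on_played p q t"
    and E: "E \<subseteq> histories t" and QE: "(\<Sum>h\<in>E. hist_weight q h) \<le> r"
  shows "- (\<Sum>h\<in>E. hist_weight p h) * ln r - 2
      \<le> (\<Sum>i\<in>UNIV. expected_plays p i t * real_of_ereal (KL (signal_dist H i p) (signal_dist H i q)))"
proof -
  have "0 < hist_weight q h" if "h \<in> histories t" "0 < hist_weight p h" for h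
    using ln_hist_weight_ratio[OF that(2)] abs_cont_on_playedD[OF abs_cont]
      played_if_hist_weight_pos[OF that] by blast
  then have "- (\<Sum>h\<in>E. hist_weight p h) * ln r - 2
      \<le> (\<Sum>h\<in>histories t. hist_weight p h * ln (hist_weight p h / hist_weight q h))"
    by (intro divergence_ge_event_bound[OF finite_histories E _ _ _ sum_hist_weight sum_hist_weight QE])
      (auto simp: hist_weight_nonneg)
  then show ?thesis by (simp add: history_divergence_eq[OF abs_cont])
qed

lemma sum_plays_KL_eq_ereal:
  assumes abs_cont: "abs_cont_on_played p q t"
  shows "(\<Sum>i\<in>UNIV. ereal (expected_plays p i t) * KL (signal_dist H i p) (signal_dist H i q))
      = ereal (\<Sum>i\<in>UNIV. expected_plays p i t * real_of_ereal (KL (signal_dist H i p) (signal_dist H i q)))"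
proof -
  have "ereal (expected_plays p i t) * KL (signal_dist H i p) (signal_dist H i q)
      = ereal (expected_plays p i t * real_of_ereal (KL (signal_dist H i p) (signal_dist H i q)))" for i
  proof (cases "0 < expected_plays p i t")
    case True
    then show ?thesis by (simp add: KL_eq_sum[OF abs_cont_on_playedD[OF abs_cont True]])
  next
    case False
    then have "expected_plays p i t = 0" using expected_plays_nonneg[of p i t] by simp
    then show ?thesis by (simp add: zero_ereal_def[symmetric])
  qed
  then show ?thesis by simp
qed

lemma hist_prob_often_played_le:
  assumes "0 < c"
  shows "(\<Sum>h\<in>{h \<in> histories t. c \<le> real (times_played i h)}. hist_weight p h)
      \<le> expected_plays p i t / c"
proof -
  have "c * (\<Sum>h\<in>{h \<in> histories t. c \<le> real (times_played i h)}. hist_weight p h)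
      \<le> (\<Sum>h\<in>histories t. hist_weight p h * real (times_played i h))"
    by (rule markov_inequality_sum) (auto simp: finite_histories hist_weight_nonneg)
  then show ?thesis using assms by (simp add: expected_plays_eq_sum pos_le_divide_eq mult.commute)
qed

lemma hist_prob_rarely_played_le:
  assumes "c < real t"
  shows "(\<Sum>h\<in>{h \<in> histories t. real (times_played i h) < c}. hist_weight p h)
      \<le> (real t - expected_plays p i t) / (real t - c)"
proof -
  have "(real t - c) * (\<Sum>h\<in>{h \<in> histories t. real (times_played i h) < c}. hist_weight p h)
      \<le> (\<Sum>h\<in>histories t. hist_weight p h * (real t - real (times_played i h)))"
    by (rule markov_inequality_sum) (auto simp: finite_histories hist_weight_nonneg times_played_le)
  also have "\<dots> = (\<Sum>h\<in>histories t. hist_weight p h) * real t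
      - (\<Sum>h\<in>histories t. hist_weight p h * real (times_played i h))"
    by (simp add: right_diff_distrib sum_subtractf sum_distrib_right)
  also have "\<dots> = real t - expected_plays p i t"
    by (simp add: sum_hist_weight expected_plays_eq_sum)
  finally show ?thesis using assms by (simp add: pos_le_divide_eq mult.commute)
qed

lemma half_played_event_bounds:
  assumes a: "0 < a" "a < 1" and t: "1 \<le> t"
    and few_p: "real t - expected_plays p i0 t \<le> a / 2 * real t powr a"
    and few_q: "expected_plays q i0 t \<le> real t powr a / 2"
  shows "(\<Sum>h\<in>{h \<in> histories t. real t / 2 \<le> real (times_played i0 h)}. hist_weight q h)
           \<le> real t powr (a - 1)"
    and "1 - a \<le> (\<Sum>h\<in>{h \<in> histories t. real t / 2 \<le> real (times_played i0 h)}. hist_weight p h)"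
proof -
  let ?E = "{h \<in> histories t. real t / 2 \<le> real (times_played i0 h)}"
  have t_pos: "0 < real t" using t by simp
  have "(\<Sum>h\<in>?E. hist_weight q h) \<le> expected_plays q i0 t / (real t / 2)"
    using t_pos by (intro hist_prob_often_played_le) simp
  also have "\<dots> \<le> real t powr (a - 1)"
    using few_q t_pos by (simp add: powr_diff field_simps)
  finally show "(\<Sum>h\<in>?E. hist_weight q h) \<le> real t powr (a - 1)" .
  have Ec: "histories t - ?E = {h \<in> histories t. real (times_played i0 h) < real t / 2}" by auto
  have "(\<Sum>h\<in>histories t - ?E. hist_weight p h)
      \<le> (real t - expected_plays p i0 t) / (real t - real t / 2)"
    unfolding Ec by (rule hist_prob_rarely_played_le) (use t_pos in simp)
  also have "\<dots> = 2 * (real t - expected_plays p i0 t) / real t" by (simp add: field_simps)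
  also have "\<dots> \<le> a * real t powr a / real t"
    using few_p t_pos by (intro divide_right_mono) auto
  also have "\<dots> = a * real t powr (a - 1)" using t_pos by (simp add: powr_diff)
  also have "\<dots> \<le> a"
    using powr_mono[of "a - 1" 0 "real t"] a t by (simp add: mult_left_le)
  finally have "(\<Sum>h\<in>histories t - ?E. hist_weight p h) \<le> a" .
  moreover have "(\<Sum>h\<in>histories t - ?E. hist_weight p h) + (\<Sum>h\<in>?E. hist_weight p h) = 1"
    using sum.subset_diff[of ?E "histories t" "hist_weight p"]
    by (simp add: finite_histories sum_hist_weight)
  ultimately show "1 - a \<le> (\<Sum>h\<in>?E. hist_weight p h)" by linarith
qed

lemma expected_divergence_ge_event:
  assumes a: "a < 1" and t: "1 \<le> t" and E: "E \<subseteq> histories t"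
    and PE: "1 - a \<le> (\<Sum>h\<in>E. hist_weight p h)" and QE: "(\<Sum>h\<in>E. hist_weight q h) \<le> real t powr (a - 1)"
  shows "ereal ((1 - a)^2 * ln (real t) - 2)
      \<le> (\<Sum>i\<in>UNIV. ereal (expected_plays p i t) * KL (signal_dist H i p) (signal_dist H i q))"
proof (cases "abs_cont_on_played p q t")
  case False
  then obtain i where "0 < expected_plays p i t" "KL (signal_dist H i p) (signal_dist H i q) = \<infinity>"
    using KL_eq_infinity unfolding abs_cont_on_played_def by blast
  then have "ereal (expected_plays p i t) * KL (signal_dist H i p) (signal_dist H i q) = \<infinity>"
    by simp
  then have "(\<Sum>i\<in>UNIV. ereal (expected_plays p i t) * KL (signal_dist H i p) (signal_dist H i q))
      = \<infinity>"
    by (subst sum_Pinfty) auto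
  then show ?thesis by simp
next
  case True
  have "(1 - a)^2 * ln (real t) \<le> (\<Sum>h\<in>E. hist_weight p h) * ((1 - a) * ln (real t))"
    unfolding power2_eq_square mult.assoc using PE a t by (intro mult_right_mono) auto
  also have "\<dots> = - (\<Sum>h\<in>E. hist_weight p h) * ln (real t powr (a - 1))"
    using t by (simp add: algebra_simps)
  finally show ?thesis
    using history_divergence_ge_event[OF True E QE] sum_plays_KL_eq_ereal[OF True] by simp
qed

lemma eventually_exp_count_divergence_ge_ln:
  assumes sc: "strongly_consistent L H alg"
    and opt: "\<forall>i. i \<noteq> i0 \<longrightarrow> exp_loss L i0 p < exp_loss L i p"
    and q: "q \<notin> cell L i0" and a: "0 < a" "a < 1"
  shows "\<forall>\<^sub>F T in sequentially. ereal ((1 - a)^2 * ln (real T) - 3)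
      \<le> (\<Sum>i\<in>UNIV. ereal (exp_count alg H p i T) * KL (signal_dist H i p) (signal_dist H i q))"
proof -
  obtain \<delta> where \<delta>: "0 < \<delta>" "\<And>i. i \<noteq> i0 \<Longrightarrow> exp_loss L i0 p + \<delta> \<le> exp_loss L i p"
    using strict_argmin_gap[of i0 "\<lambda>i. exp_loss L i p"] opt by blast
  define \<Delta> where "\<Delta> = exp_loss L i0 q - (MIN k. exp_loss L k q)"
  from q obtain j where "exp_loss L j q < exp_loss L i0 q" by (auto simp: cell_def not_le)
  moreover have "(MIN k. exp_loss L k q) \<le> exp_loss L j q" by simp
  ultimately have \<Delta>: "0 < \<Delta>" unfolding \<Delta>_def by linarith
  have pos: "0 < a * \<delta> / 2" "0 < \<Delta> / 2" using a \<delta>(1) \<Delta> by auto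
  have "\<forall>\<^sub>F t in sequentially. ereal ((1 - a)^2 * ln (real t) - 2)
      \<le> (\<Sum>i\<in>UNIV. ereal (expected_plays p i t) * KL (signal_dist H i p) (signal_dist H i q))"
    using strongly_consistent_regret_le[OF sc a(1) pos(1), of p]
      strongly_consistent_regret_le[OF sc a(1) pos(2), of q] eventually_ge_at_top[of 1]
  proof eventually_elim
    case (elim t)
    have "\<delta> * (real t - expected_plays p i0 t) \<le> a * \<delta> / 2 * real t powr a"
      using exp_regret_ge_gap[OF less_imp_le[OF \<delta>(1)] \<delta>(2)] elim(1) by (rule order_trans)
    also have "\<dots> = \<delta> * (a / 2 * real t powr a)" by simp
    finally have few_p: "real t - expected_plays p i0 t \<le> a / 2 * real t powr a"
      using \<delta>(1) by simp
    have "\<Delta> * expected_plays q i0 t \<le> \<Delta> * (real t powr a / 2)"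
      using exp_regret_ge_plays[of q i0 t L] elim(2) unfolding \<Delta>_def by (simp add: mult.commute)
    then have few_q: "expected_plays q i0 t \<le> real t powr a / 2"
      using \<Delta> by simp
    note bounds = half_played_event_bounds[OF a elim(3) few_p few_q]
    show ?case by (rule expected_divergence_ge_event[OF a(2) elim(3) _ bounds(2,1)]) auto
  qed
  from eventually_compose_filterlim[OF this filterlim_minus_const_nat_at_top[of 1]]
  show ?thesis
    using eventually_ge_at_top[of 2]
  proof eventually_elim
    case (elim T)
    have "(1 - a)^2 * ln (real T) \<le> (1 - a)^2 * (1 + ln (real (T - 1)))"
      using ln_le_one_plus_ln_pred[OF elim(2)] by (intro mult_left_mono) auto
    moreover have "(1 - a)^2 \<le> 1" using a by (simp add: power_le_one)
    ultimately have "ereal ((1 - a)^2 * ln (real T) - 3) \<le> ereal ((1 - a)^2 * ln (real (T - 1)) - 2)"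
      by (simp add: algebra_simps)
    from order_trans[OF this elim(1)] show ?case
      by (simp add: exp_count_eq_expected_plays)
  qed
qed

end

theorem lemma1:
  fixes L :: "'a::finite \<Rightarrow> 'm::finite \<Rightarrow> real"
    and H :: "'a \<Rightarrow> 'm \<Rightarrow> 's::finite"
    and pstar :: "'m pmf"
    and a1 :: 'a
    and alg :: "('a, 's) algorithm"
  assumes "globally_observable L H"
    and "\<forall>i. i \<noteq> a1 \<longrightarrow> exp_loss L a1 pstar < exp_loss L i pstar"
    and "strongly_consistent L H alg"
  shows "\<forall>q. q \<notin> cell L a1 \<longrightarrow>
           (\<exists>f :: nat \<Rightarrow> real. f \<in> o(\<lambda>T. ln (real T)) \<and>
              (\<forall>\<^sub>F T in sequentially.
                 ereal (ln (real T) - f T)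
                   \<le> (\<Sum>i\<in>UNIV. ereal (exp_count alg H pstar i T)
                                  * KL (signal_dist H i pstar) (signal_dist H i q))))"
proof (intro allI impI)
  fix q assume q: "q \<notin> cell L a1"
  have "\<forall>\<^sub>F T in sequentially. ereal ((1 - c) * ln (real T))
      \<le> (\<Sum>i\<in>UNIV. ereal (exp_count alg H pstar i T) * KL (signal_dist H i pstar) (signal_dist H i q))"
    if c: "0 < c" for c
  proof -
    obtain a where a: "0 < a" "a < 1"
      and absorb: "\<forall>\<^sub>F T in sequentially. (1 - c) * ln (real T) \<le> (1 - a)^2 * ln (real T) - 3"
      using eventually_ln_absorbs_constant[OF c] by blast
    from absorb eventually_exp_count_divergence_ge_ln[OF assms(3) assms(2) q a]
    show ?thesis by eventually_elim (meson ereal_less_eq(3) order_trans)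
  qed
  then show "\<exists>f :: nat \<Rightarrow> real. f \<in> o(\<lambda>T. ln (real T)) \<and>
      (\<forall>\<^sub>F T in sequentially. ereal (ln (real T) - f T)
         \<le> (\<Sum>i\<in>UNIV. ereal (exp_count alg H pstar i T) * KL (signal_dist H i pstar) (signal_dist H i q)))"
    by (rule exists_little_o_deficit)
qed

end
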